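(* Consider the monoid (algebra in sets) $M$ generated by $a,b,c,d,e,f,g,h,i,j,k,l$ with relations $da=eb$, $fb=hc$, $gb=ic$, $kh=li$, $je=kf=lg$, and the rewriting system $eb\to da$, $hc\to fb$, $gb\to ic$, $kf\to je$, $lg\to je$, $li\to kh$ (whose normal forms form a PBW basis of the linearised algebra). Let $\Pi$ be the poset with elements $A,B,S,U,V,W,X,Z$ and covering relations $A\prec B$ (labelled $a$), $A\prec S$ ($b$), $A\prec U$ ($c$), $B\prec V$ ($d$), $S\prec V$ ($e$), $S\prec W$ ($f$), $S\prec X$ ($g$), $U\prec W$ ($h$), $U\prec X$ ($i$), $V\prec Z$ ($j$), $W\prec Z$ ($k$), $X\prec Z$ ($l$), an interval of a partition poset of $M$; a chain read from bottom to top gives a word in $M$ read from right to left. Then $\Pi$ admits no CL-labelling such that $\Pi$ is CL-shellable and the minimal chains (for the lexicographic order of the CL-labelling) correspond to PBW elements of the algebra, i.e. to normal forms of this rewriting system.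
   Context: For an algebra in sets (monoid) presented by generators $E$ and homogeneous relations, the partition poset $\Pi^{(d)}$ has as elements the elements of weight at most $d$ lying below some element of weight $d$, with $x\le y$ iff $y=zx$ for some $z$; covering edges are labelled by the generator multiplied on the left. A chain-edge labelling of a poset assigns to each pair (maximal chain, covering edge on it) a label in a poset $\Lambda$, such that maximal chains agreeing on their bottom edges get the same labels there. It is a CL-labelling if in each rooted interval $[x,y]_r$ (interval $[x,y]$ together with a maximal chain $r$ of $[\hat0,x]$) there is a unique maximal chain with strictly increasing labels, and it lexicographically precedes all other maximal chains of the interval; a poset with a CL-labelling is CL-shellable. *)

theory Defs
  imports Main
begin

datatype pel = A | B | S | U | V | W | X | Z

datatype gen = Ga | Gb | Gc | Gd | Ge | Gf | Gg | Gh | Gi | Gj | Gk | Gl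

definition pi_edges :: "(pel \<times> gen \<times> pel) set" where
  "pi_edges = {(A,Ga,B), (A,Gb,S), (A,Gc,U), (B,Gd,V), (S,Ge,V), (S,Gf,W), (S,Gg,X),
               (U,Gh,W), (U,Gi,X), (V,Gj,Z), (W,Gk,Z), (X,Gl,Z)}"

definition pi_cov :: "pel \<Rightarrow> pel \<Rightarrow> bool" where
  "pi_cov x y \<longleftrightarrow> (\<exists>g. (x, g, y) \<in> pi_edges)"

definition pi_lab :: "pel \<Rightarrow> pel \<Rightarrow> gen" where
  "pi_lab x y = (THE g. (x, g, y) \<in> pi_edges)"

definition pi_le :: "pel \<Rightarrow> pel \<Rightarrow> bool" where
  "pi_le = pi_cov\<^sup>*\<^sup>*"

definition sat_chain :: "pel \<Rightarrow> pel \<Rightarrow> pel list \<Rightarrow> bool" where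
  "sat_chain x y c \<longleftrightarrow> c \<noteq> [] \<and> hd c = x \<and> last c = y \<and>
     (\<forall>i. Suc i < length c \<longrightarrow> pi_cov (c ! i) (c ! Suc i))"

definition maxchain :: "pel list \<Rightarrow> bool" where
  "maxchain m \<longleftrightarrow> sat_chain A Z m"

text \<open>A chain-edge labelling with values in the poset (Lam, L): lam m i is the label
  of the i-th edge (m!i, m!(i+1)) of the maximal chain m.\<close>
definition chain_edge_labelling :: "'l set \<Rightarrow> (pel list \<Rightarrow> nat \<Rightarrow> 'l) \<Rightarrow> bool" where
  "chain_edge_labelling Lam lam \<longleftrightarrow>
     (\<forall>m i. maxchain m \<and> Suc i < length m \<longrightarrow> lam m i \<in> Lam) \<and>
     (\<forall>m m' i. maxchain m \<and> maxchain m' \<and> Suc i < length m \<and>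
        take (Suc (Suc i)) m = take (Suc (Suc i)) m' \<longrightarrow> lam m i = lam m' i)"

text \<open>Labels of a chain c of [x,y] in the rooted interval [x,y]_r (r a maximal chain of [A,x]):
  the labels of the edges of c on a maximal chain extending r followed by c.\<close>
definition rlabels :: "(pel list \<Rightarrow> nat \<Rightarrow> 'l) \<Rightarrow> pel list \<Rightarrow> pel list \<Rightarrow> 'l list" where
  "rlabels lam r c =
     map (\<lambda>i. lam (SOME m. maxchain m \<and> (\<exists>s. m = r @ tl c @ s)) (length r - 1 + i))
         [0..<length c - 1]"

definition lab_less :: "'l rel \<Rightarrow> 'l \<Rightarrow> 'l \<Rightarrow> bool" where
  "lab_less L p q \<longleftrightarrow> (p, q) \<in> L \<and> p \<noteq> q"

definition strictly_increasing :: "'l rel \<Rightarrow> 'l list \<Rightarrow> bool" where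
  "strictly_increasing L ls \<longleftrightarrow> (\<forall>i. Suc i < length ls \<longrightarrow> lab_less L (ls ! i) (ls ! Suc i))"

definition lex_precedes :: "'l rel \<Rightarrow> 'l list \<Rightarrow> 'l list \<Rightarrow> bool" where
  "lex_precedes L ls ls' \<longleftrightarrow>
     (\<exists>k. k < length ls \<and> k < length ls' \<and> take k ls = take k ls' \<and> lab_less L (ls ! k) (ls' ! k))"

definition is_CL_labelling :: "'l rel \<Rightarrow> (pel list \<Rightarrow> nat \<Rightarrow> 'l) \<Rightarrow> bool" where
  "is_CL_labelling L lam \<longleftrightarrow>
     (\<forall>x y r. sat_chain A x r \<and> pi_le x y \<longrightarrow>
        (\<exists>!c. sat_chain x y c \<and> strictly_increasing L (rlabels lam r c)) \<and>
        (\<forall>c c'. sat_chain x y c \<and> strictly_increasing L (rlabels lam r c) \<and>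
                sat_chain x y c' \<and> c' \<noteq> c \<longrightarrow>
                lex_precedes L (rlabels lam r c) (rlabels lam r c')))"

text \<open>Word of the monoid read off a chain: read from bottom to top, written from right to left
  (so the list head is the leftmost letter).\<close>
definition chain_word :: "pel list \<Rightarrow> gen list" where
  "chain_word c = rev (map (\<lambda>i. pi_lab (c ! i) (c ! Suc i)) [0..<length c - 1])"

definition rw_rules :: "(gen list \<times> gen list) list" where
  "rw_rules = [([Ge,Gb],[Gd,Ga]), ([Gh,Gc],[Gf,Gb]), ([Gg,Gb],[Gi,Gc]),
               ([Gk,Gf],[Gj,Ge]), ([Gl,Gg],[Gj,Ge]), ([Gl,Gi],[Gk,Gh])]"

definition normal_form :: "gen list \<Rightarrow> bool" where
  "normal_form w \<longleftrightarrow> \<not> (\<exists>(lhs, rhs) \<in> set rw_rules. \<exists>p s. w = p @ lhs @ s)"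

definition minimal_chains_PBW :: "'l rel \<Rightarrow> (pel list \<Rightarrow> nat \<Rightarrow> 'l) \<Rightarrow> bool" where
  "minimal_chains_PBW L lam \<longleftrightarrow>
     (\<forall>x y r c. sat_chain A x r \<and> sat_chain x y c \<and>
        (\<forall>c'. sat_chain x y c' \<and> c' \<noteq> c \<longrightarrow> lex_precedes L (rlabels lam r c) (rlabels lam r c'))
        \<longrightarrow> normal_form (chain_word c))"

end

theory Submission
  imports Defs
begin

text \<open>
  Whatever the labelling, in each of the rooted intervals [A,W], [A,X] and [U,Z] (the last one
  rooted at A < U) exactly one of the two maximal chains has a normal word, so it must be the
  increasing, lexicographically first chain. Write b, c, f, g, h, i, k for the labels of the
  edges A S, A U, S W, S X, U W, U X, W Z; the labels of A S and A U do not depend on the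
  maximal chain, since they are bottom edges. Then [A,W] gives b < f and (b,f) before (c,h),
  and [A,X] gives (c,i) before (b,g); hence b = c and f < h. [U,Z] gives h < k. Thus
  c < h < k, so A < U < W < Z is the increasing chain of [A,Z], although its word khc contains
  the left-hand side hc of a rule.
\<close>

lemma sat_chain_Nil [simp]: "\<not> sat_chain x y []"
  by (simp add: sat_chain_def)

lemma sat_chain_singleton [simp]: "sat_chain x y [a] \<longleftrightarrow> a = x \<and> a = y"
  by (auto simp: sat_chain_def)

lemma sat_chain_Cons_Cons [simp]:
  "sat_chain x y (a # b # c) \<longleftrightarrow> a = x \<and> pi_cov a b \<and> sat_chain b y (b # c)"
  by (auto simp: sat_chain_def nth_Cons' less_Suc_eq_0_disj)

lemma sat_chain_pi_le: "sat_chain x y c \<Longrightarrow> pi_le x y"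
proof (induction c arbitrary: x)
  case Nil
  then show ?case by simp
next
  case (Cons a c)
  show ?case
  proof (cases c)
    case Nil
    with Cons.prems show ?thesis by (auto simp: pi_le_def)
  next
    case (Cons b c')
    with Cons.prems Cons.IH[of b] show ?thesis
      by (auto simp: pi_le_def intro: converse_rtranclp_into_rtranclp)
  qed
qed

lemma pi_cov_iff:
  "pi_cov x y \<longleftrightarrow> (x, y) \<in> {(A,B), (A,S), (A,U), (B,V), (S,V), (S,W), (S,X),
                             (U,W), (U,X), (V,Z), (W,Z), (X,Z)}"
  by (cases x; cases y) (simp_all add: pi_cov_def pi_edges_def)

fun rank :: "pel \<Rightarrow> nat" where
  "rank A = 0" | "rank B = 1" | "rank S = 1" | "rank U = 1"
| "rank V = 2" | "rank W = 2" | "rank X = 2" | "rank Z = 3"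

lemma pi_cov_rank: "pi_cov x y \<Longrightarrow> rank y = Suc (rank x)"
  by (auto simp: pi_cov_iff)

lemma sat_chain_length: "sat_chain x y c \<Longrightarrow> length c = Suc (rank y - rank x) \<and> rank x \<le> rank y"
proof (induction c arbitrary: x)
  case Nil
  then show ?case by simp
next
  case (Cons a c)
  show ?case
  proof (cases c)
    case Nil
    with Cons.prems show ?thesis by auto
  next
    case (Cons b c')
    with Cons.prems Cons.IH[of b] show ?thesis
      by (auto dest: pi_cov_rank)
  qed
qed

lemma sat_chain_rank_Suc_Suc:
  assumes "sat_chain x y c" and "rank y = Suc (Suc (rank x))"
  obtains q where "c = [x, q, y]" and "pi_cov x q" and "pi_cov q y"
proof -
  from assms have "length c = 3" by (auto dest: sat_chain_length)
  with assms(1) show ?thesis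
    by (auto simp: numeral_3_eq_3 length_Suc_conv intro: that)
qed

lemma sat_chain_A_W: "sat_chain A W c \<longleftrightarrow> c = [A,S,W] \<or> c = [A,U,W]"
  by (auto simp: pi_cov_iff elim!: sat_chain_rank_Suc_Suc)

lemma sat_chain_A_X: "sat_chain A X c \<longleftrightarrow> c = [A,S,X] \<or> c = [A,U,X]"
  by (auto simp: pi_cov_iff elim!: sat_chain_rank_Suc_Suc)

lemma sat_chain_U_Z: "sat_chain U Z c \<longleftrightarrow> c = [U,W,Z] \<or> c = [U,X,Z]"
  by (auto simp: pi_cov_iff elim!: sat_chain_rank_Suc_Suc)

lemma maxchain_iff:
  "maxchain m \<longleftrightarrow> m \<in> {[A,B,V,Z], [A,S,V,Z], [A,S,W,Z], [A,S,X,Z], [A,U,W,Z], [A,U,X,Z]}"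
proof
  assume "maxchain m"
  then have m: "sat_chain A Z m" by (simp add: maxchain_def)
  then have "length m = 4" by (auto dest: sat_chain_length)
  with m obtain q r where "m = [A,q,r,Z]" "pi_cov A q" "pi_cov q r" "pi_cov r Z"
    by (auto simp: numeral_eq_Suc length_Suc_conv)
  then show "m \<in> {[A,B,V,Z], [A,S,V,Z], [A,S,W,Z], [A,S,X,Z], [A,U,W,Z], [A,U,X,Z]}"
    by (cases q; cases r) (simp_all add: pi_cov_iff)
qed (auto simp: maxchain_def pi_cov_iff)

lemma pi_lab_eq: "(x, g, y) \<in> pi_edges \<Longrightarrow> pi_lab x y = g"
  unfolding pi_lab_def by (rule the_equality) (auto simp: pi_edges_def)

lemma pi_lab_simps [simp]:
  "pi_lab A B = Ga" "pi_lab A S = Gb" "pi_lab A U = Gc" "pi_lab B V = Gd"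
  "pi_lab S V = Ge" "pi_lab S W = Gf" "pi_lab S X = Gg" "pi_lab U W = Gh"
  "pi_lab U X = Gi" "pi_lab V Z = Gj" "pi_lab W Z = Gk" "pi_lab X Z = Gl"
  by (rule pi_lab_eq, simp add: pi_edges_def)+

lemma chain_word_singleton [simp]: "chain_word [x] = []"
  by (simp add: chain_word_def)

lemma chain_word_Cons_Cons [simp]: "chain_word (x # y # c) = chain_word (y # c) @ [pi_lab x y]"
  by (simp add: chain_word_def upt_conv_Cons map_Suc_upt[symmetric] del: upt_Suc)

lemma not_normal_form_redex:
  "(lhs, rhs) \<in> set rw_rules \<Longrightarrow> \<not> normal_form (p @ lhs @ s)"
  by (auto simp: normal_form_def)

lemma not_normal_form_chain_word:
  "\<not> normal_form (chain_word [A,U,W])" "\<not> normal_form (chain_word [A,S,X])"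
  "\<not> normal_form (chain_word [U,X,Z])" "\<not> normal_form (chain_word [A,U,W,Z])"
  using not_normal_form_redex[of "[Gh,Gc]" "[Gf,Gb]" "[]" "[]"]
    not_normal_form_redex[of "[Gg,Gb]" "[Gi,Gc]" "[]" "[]"]
    not_normal_form_redex[of "[Gl,Gi]" "[Gk,Gh]" "[]" "[]"]
    not_normal_form_redex[of "[Gh,Gc]" "[Gf,Gb]" "[Gk]" "[]"]
  by (simp_all add: rw_rules_def)

lemma rlabels_unique_extension:
  assumes "maxchain (r @ tl c @ s)" and "\<And>s'. maxchain (r @ tl c @ s') \<Longrightarrow> s' = s"
  shows "rlabels lam r c = map (\<lambda>i. lam (r @ tl c @ s) (length r - 1 + i)) [0..<length c - 1]"
proof -
  have "(SOME m. maxchain m \<and> (\<exists>s. m = r @ tl c @ s)) = r @ tl c @ s"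
    using assms by (intro some_equality) blast+
  then show ?thesis by (simp add: rlabels_def)
qed

lemma strictly_increasing_singleton [simp]: "strictly_increasing L [p]"
  by (simp add: strictly_increasing_def)

lemma strictly_increasing_Cons_Cons [simp]:
  "strictly_increasing L (p # q # ls) \<longleftrightarrow> lab_less L p q \<and> strictly_increasing L (q # ls)"
  by (auto simp: strictly_increasing_def nth_Cons' less_Suc_eq_0_disj)

lemma lex_precedes_pair:
  "lex_precedes L [p1, p2] [q1, q2] \<longleftrightarrow> lab_less L p1 q1 \<or> (p1 = q1 \<and> lab_less L p2 q2)"
  by (auto simp: lex_precedes_def less_Suc_eq take_Suc_conv_app_nth)

lemma lab_less_trans:
  assumes "trans L" "antisym L" "lab_less L p q" "lab_less L q r"
  shows "lab_less L p r"
  using assms unfolding lab_less_def trans_def antisym_def by blast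

lemma lex_precedes_pair_antisym:
  assumes "antisym L" "lex_precedes L [p1, p2] [q1, q2]" "lex_precedes L [q1, q3] [p1, p4]"
  shows "p1 = q1 \<and> lab_less L p2 q2"
  using assms unfolding lex_precedes_pair lab_less_def antisym_def by blast

lemma CL_PBW_increasing_chain_normal:
  assumes CL: "is_CL_labelling L lam" and PBW: "minimal_chains_PBW L lam"
    and r: "sat_chain A x r" and c: "sat_chain x y c"
    and incr: "strictly_increasing L (rlabels lam r c)"
  shows "normal_form (chain_word c)"
proof -
  have "lex_precedes L (rlabels lam r c) (rlabels lam r c')"
    if "sat_chain x y c'" "c' \<noteq> c" for c'
    using CL r c incr that sat_chain_pi_le[OF c] unfolding is_CL_labelling_def by blast
  with PBW r c show ?thesis unfolding minimal_chains_PBW_def by blast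
qed

lemma CL_PBW_unique_normal_chain:
  assumes CL: "is_CL_labelling L lam" and PBW: "minimal_chains_PBW L lam"
    and r: "sat_chain A x r" and c: "sat_chain x y c"
    and unique: "\<And>c'. sat_chain x y c' \<Longrightarrow> normal_form (chain_word c') \<Longrightarrow> c' = c"
  shows "strictly_increasing L (rlabels lam r c)"
    and "\<And>c'. sat_chain x y c' \<Longrightarrow> c' \<noteq> c \<Longrightarrow> lex_precedes L (rlabels lam r c) (rlabels lam r c')"
proof -
  from CL r sat_chain_pi_le[OF c] obtain c0
    where c0: "sat_chain x y c0" "strictly_increasing L (rlabels lam r c0)"
    unfolding is_CL_labelling_def by blast
  with CL_PBW_increasing_chain_normal[OF CL PBW r] unique have "c0 = c" by blast
  with c0 show incr: "strictly_increasing L (rlabels lam r c)" by simp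
  show "lex_precedes L (rlabels lam r c) (rlabels lam r c')"
    if "sat_chain x y c'" "c' \<noteq> c" for c'
    using CL r c incr that sat_chain_pi_le[OF c] unfolding is_CL_labelling_def by blast
qed

context
  fixes L :: "'l rel" and lam :: "pel list \<Rightarrow> nat \<Rightarrow> 'l"
  assumes CL: "is_CL_labelling L lam" and PBW: "minimal_chains_PBW L lam"
begin

lemma minimal_chain_A_W:
  "lab_less L (lam [A,S,W,Z] 0) (lam [A,S,W,Z] 1)"
  "lex_precedes L [lam [A,S,W,Z] 0, lam [A,S,W,Z] 1] [lam [A,U,W,Z] 0, lam [A,U,W,Z] 1]"
proof -
  have chains: "sat_chain A A [A]" "sat_chain A W [A,S,W]" "sat_chain A W [A,U,W]"
    by (simp_all add: pi_cov_iff)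
  have unique: "c = [A,S,W]" if "sat_chain A W c" "normal_form (chain_word c)" for c
    using that not_normal_form_chain_word(1) by (auto simp: sat_chain_A_W)
  have labels: "rlabels lam [A] [A,S,W] = [lam [A,S,W,Z] 0, lam [A,S,W,Z] 1]"
    "rlabels lam [A] [A,U,W] = [lam [A,U,W,Z] 0, lam [A,U,W,Z] 1]"
    by (subst rlabels_unique_extension[where s="[Z]"]; simp add: maxchain_iff upt_rec)+
  from CL_PBW_unique_normal_chain(1)[OF CL PBW chains(1,2) unique]
  show "lab_less L (lam [A,S,W,Z] 0) (lam [A,S,W,Z] 1)"
    by (simp add: labels)
  from CL_PBW_unique_normal_chain(2)[OF CL PBW chains(1,2) unique chains(3)]
  show "lex_precedes L [lam [A,S,W,Z] 0, lam [A,S,W,Z] 1] [lam [A,U,W,Z] 0, lam [A,U,W,Z] 1]"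
    by (simp add: labels)
qed

lemma minimal_chain_A_X:
  "lex_precedes L [lam [A,U,X,Z] 0, lam [A,U,X,Z] 1] [lam [A,S,X,Z] 0, lam [A,S,X,Z] 1]"
proof -
  have chains: "sat_chain A A [A]" "sat_chain A X [A,U,X]" "sat_chain A X [A,S,X]"
    by (simp_all add: pi_cov_iff)
  have unique: "c = [A,U,X]" if "sat_chain A X c" "normal_form (chain_word c)" for c
    using that not_normal_form_chain_word(2) by (auto simp: sat_chain_A_X)
  have "rlabels lam [A] [A,U,X] = [lam [A,U,X,Z] 0, lam [A,U,X,Z] 1]"
    "rlabels lam [A] [A,S,X] = [lam [A,S,X,Z] 0, lam [A,S,X,Z] 1]"
    by (subst rlabels_unique_extension[where s="[Z]"]; simp add: maxchain_iff upt_rec)+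
  with CL_PBW_unique_normal_chain(2)[OF CL PBW chains(1,2) unique chains(3)] show ?thesis
    by simp
qed

lemma minimal_chain_U_Z: "lab_less L (lam [A,U,W,Z] 1) (lam [A,U,W,Z] 2)"
proof -
  have chains: "sat_chain A U [A,U]" "sat_chain U Z [U,W,Z]"
    by (simp_all add: pi_cov_iff)
  have unique: "c = [U,W,Z]" if "sat_chain U Z c" "normal_form (chain_word c)" for c
    using that not_normal_form_chain_word(3) by (auto simp: sat_chain_U_Z)
  have "rlabels lam [A,U] [U,W,Z] = [lam [A,U,W,Z] 1, lam [A,U,W,Z] 2]"
    by (subst rlabels_unique_extension[where s="[]"]; simp add: maxchain_iff upt_rec numeral_2_eq_2)
  with CL_PBW_unique_normal_chain(1)[OF CL PBW chains unique] show ?thesis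
    by simp
qed

lemma not_increasing_A_U_W_Z:
  "\<not> (lab_less L (lam [A,U,W,Z] 0) (lam [A,U,W,Z] 1) \<and> lab_less L (lam [A,U,W,Z] 1) (lam [A,U,W,Z] 2))"
proof
  have chains: "sat_chain A A [A]" "sat_chain A Z [A,U,W,Z]"
    by (simp_all add: pi_cov_iff)
  have "rlabels lam [A] [A,U,W,Z] = [lam [A,U,W,Z] 0, lam [A,U,W,Z] 1, lam [A,U,W,Z] 2]"
    by (subst rlabels_unique_extension[where s="[]"]; simp add: maxchain_iff upt_rec numeral_2_eq_2)
  moreover assume "lab_less L (lam [A,U,W,Z] 0) (lam [A,U,W,Z] 1) \<and>
    lab_less L (lam [A,U,W,Z] 1) (lam [A,U,W,Z] 2)"
  ultimately have "normal_form (chain_word [A,U,W,Z])"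
    by (intro CL_PBW_increasing_chain_normal[OF CL PBW chains]) simp
  with not_normal_form_chain_word(4) show False ..
qed

end

theorem mainTheorem10:
  fixes Lam :: "'l set" and L :: "'l rel" and lam :: "pel list \<Rightarrow> nat \<Rightarrow> 'l"
  assumes "partial_order_on Lam L"
    and "chain_edge_labelling Lam lam"
  shows "\<not> (is_CL_labelling L lam \<and> minimal_chains_PBW L lam)"
proof
  assume "is_CL_labelling L lam \<and> minimal_chains_PBW L lam"
  then have CL: "is_CL_labelling L lam" and PBW: "minimal_chains_PBW L lam" by auto
  from assms(1) have "trans L" "antisym L"
    by (auto simp: partial_order_on_def preorder_on_def)
  from assms(2) have first_labels:
    "lam [A,S,X,Z] 0 = lam [A,S,W,Z] 0" "lam [A,U,X,Z] 0 = lam [A,U,W,Z] 0"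
    unfolding chain_edge_labelling_def by (auto simp: maxchain_iff)
  have "lam [A,S,W,Z] 0 = lam [A,U,W,Z] 0 \<and> lab_less L (lam [A,S,W,Z] 1) (lam [A,U,W,Z] 1)"
    by (rule lex_precedes_pair_antisym[OF \<open>antisym L\<close> minimal_chain_A_W(2)[OF CL PBW]
          minimal_chain_A_X[OF CL PBW, unfolded first_labels]])
  with minimal_chain_A_W(1)[OF CL PBW] \<open>trans L\<close> \<open>antisym L\<close>
  have "lab_less L (lam [A,U,W,Z] 0) (lam [A,U,W,Z] 1)"
    by (auto intro: lab_less_trans)
  with minimal_chain_U_Z[OF CL PBW] not_increasing_A_U_W_Z[OF CL PBW] show False
    by blast
qed

end
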